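(* Let $m,n\in\mathbb{N}$ and let $G=K_{1,m,n}$ be the complete tripartite graph with parts of sizes $1,m,n$. Then: (1) if $m=1$, $G$ is an $\mathcal{N}$ position for Grim if and only if $n$ is even; (2) if $m=2$ and $n\geq 2$, $G$ is an $\mathcal{N}$ position; (3) if $m,n\geq 3$, $G$ is an $\mathcal{N}$ position if and only if $m+n$ is even.
   Context: Grim is a two-player game on a finite simple undirected graph. Any isolated vertices of the starting graph are deleted before play begins. Players alternate moves; a move consists of selecting a vertex of the current graph and deleting it together with all its incident edges, after which every vertex that has become isolated is also deleted. The player who makes the last legal move wins (a player facing the empty graph has no move and loses). A graph is an $\mathcal{N}$ position if the player about to move has a winning strategy, and a $\mathcal{P}$ position otherwise. *)

theory Defs
  imports Main
begin

text \<open>A finite simple graph is represented by a vertex set V and a set E of edges,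
each edge being a 2-element subset of V.\<close>

type_synonym 'a graph = "'a set \<times> 'a set set"

definition simple_graph :: "'a graph \<Rightarrow> bool" where
  "simple_graph G \<longleftrightarrow> finite (fst G) \<and> (\<forall>e\<in>snd G. card e = 2 \<and> e \<subseteq> fst G)"

definition del_isolated :: "'a graph \<Rightarrow> 'a graph" where
  "del_isolated G = ({x\<in>fst G. \<exists>e\<in>snd G. x \<in> e}, snd G)"

definition grim_move :: "'a graph \<Rightarrow> 'a \<Rightarrow> 'a graph" where
  "grim_move G v = del_isolated (fst G - {v}, {e\<in>snd G. v \<notin> e})"

text \<open>grim_win G: the player about to move from G has a winning strategy
  (normal play: the player with no legal move loses).\<close>
function grim_win :: "'a graph \<Rightarrow> bool" where
  "grim_win (V, E) = (if finite V then (\<exists>v\<in>V. \<not> grim_win (grim_move (V, E) v)) else False)"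
  by pat_completeness auto
termination
proof (relation "measure (\<lambda>(V, E). card V)")
  fix V :: "'a set" and E v
  assume "finite V" "v \<in> V"
  then show "(grim_move (V, E) v, V, E) \<in> measure (\<lambda>(V, E). card V)"
    unfolding grim_move_def del_isolated_def
    by (auto intro!: psubset_card_mono)
qed auto

text \<open>A graph is an N position for Grim if the first player wins the game played
  on it after the isolated vertices of the starting graph are deleted.\<close>
definition grim_N :: "'a graph \<Rightarrow> bool" where
  "grim_N G \<longleftrightarrow> grim_win (del_isolated G)"

definition K3 :: "nat \<Rightarrow> nat \<Rightarrow> nat \<Rightarrow> (nat \<times> nat) graph" where
  "K3 a b c =
    (let V = {(0, j) | j. j < a} \<union> {(1, j) | j. j < b} \<union> {(2, j) | j. j < c}
     in (V, {{x, y} | x y. x \<in> V \<and> y \<in> V \<and> fst x \<noteq> fst y}))"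

end

theory Submission
  imports Defs
begin

text \<open>Deleting a vertex of a complete multipartite graph leaves the complete multipartite graph
  on the remaining vertices, and the only vertices that become isolated are those of a graph
  with a single nonempty part, which then vanishes entirely. Hence the outcome of Grim on
  \<open>K\<^sub>a\<^sub>,\<^sub>b\<^sub>,\<^sub>c\<close> depends only on \<open>(a, b, c)\<close>, and for \<open>a \<le> 1\<close> one checks that an explicit
  closed form satisfies the resulting recursion on part sizes.\<close>

definition complete_multipartite :: "('a \<Rightarrow> 'b) \<Rightarrow> 'a set \<Rightarrow> 'a graph" where
  "complete_multipartite p V = (V, {{x, y} | x y. x \<in> V \<and> y \<in> V \<and> p x \<noteq> p y})"

lemma fst_complete_multipartite [simp]: "fst (complete_multipartite p V) = V"
  by (simp add: complete_multipartite_def)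

lemma grim_move_complete_multipartite:
  "grim_move (complete_multipartite p V) v = del_isolated (complete_multipartite p (V - {v}))"
proof -
  have "{e \<in> {{x, y} | x y. x \<in> V \<and> y \<in> V \<and> p x \<noteq> p y}. v \<notin> e} =
        {{x, y} | x y. x \<in> V - {v} \<and> y \<in> V - {v} \<and> p x \<noteq> p y}"
    by blast
  then show ?thesis by (simp add: grim_move_def complete_multipartite_def)
qed

lemma non_isolated_complete_multipartite:
  "(\<exists>e\<in>snd (complete_multipartite p V). u \<in> e) \<longleftrightarrow> u \<in> V \<and> (\<exists>y\<in>V. p y \<noteq> p u)"
proof
  assume "\<exists>e\<in>snd (complete_multipartite p V). u \<in> e"
  then obtain x y where "x \<in> V" "y \<in> V" "p x \<noteq> p y" "u = x \<or> u = y"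
    by (auto simp: complete_multipartite_def)
  then show "u \<in> V \<and> (\<exists>y\<in>V. p y \<noteq> p u)" by metis
next
  assume "u \<in> V \<and> (\<exists>y\<in>V. p y \<noteq> p u)"
  then obtain y where "u \<in> V" "y \<in> V" "p u \<noteq> p y" by metis
  then have "{u, y} \<in> snd (complete_multipartite p V)" by (auto simp: complete_multipartite_def)
  then show "\<exists>e\<in>snd (complete_multipartite p V). u \<in> e" by blast
qed

lemma del_isolated_complete_multipartite:
  "del_isolated (complete_multipartite p V) =
     complete_multipartite p (if \<exists>x\<in>V. \<exists>y\<in>V. p x \<noteq> p y then V else {})"
proof (cases "\<exists>x\<in>V. \<exists>y\<in>V. p x \<noteq> p y")
  case True
  then have "\<exists>y\<in>V. p y \<noteq> p u" if "u \<in> V" for u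
    using that by metis
  then have "fst (del_isolated (complete_multipartite p V)) = V"
    by (auto simp: del_isolated_def non_isolated_complete_multipartite)
  then have "del_isolated (complete_multipartite p V) = complete_multipartite p V"
    by (simp add: prod_eq_iff del_isolated_def)
  with True show ?thesis by simp
next
  case False
  have "snd (complete_multipartite p V) = {}"
  proof (rule equals0I)
    fix e assume "e \<in> snd (complete_multipartite p V)"
    then obtain x y where "x \<in> V" "y \<in> V" "p x \<noteq> p y"
      by (auto simp: complete_multipartite_def)
    with False show False by blast
  qed
  then have "del_isolated (complete_multipartite p V) = ({}, {})"
    by (simp add: del_isolated_def)
  then show ?thesis
    unfolding if_not_P[OF False] by (simp add: complete_multipartite_def[of p "{}"])
qed

lemma grim_win_iff: "grim_win G \<longleftrightarrow> finite (fst G) \<and> (\<exists>v\<in>fst G. \<not> grim_win (grim_move G v))"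
  by (cases G) simp

lemma grim_win_complete_multipartite:
  assumes "finite V"
  shows "grim_win (del_isolated (complete_multipartite p V)) \<longleftrightarrow>
           (\<exists>x\<in>V. \<exists>y\<in>V. p x \<noteq> p y) \<and>
           (\<exists>v\<in>V. \<not> grim_win (del_isolated (complete_multipartite p (V - {v}))))"
proof (cases "\<exists>x\<in>V. \<exists>y\<in>V. p x \<noteq> p y")
  case True
  then have "del_isolated (complete_multipartite p V) = complete_multipartite p V"
    by (simp add: del_isolated_complete_multipartite)
  with True assms show ?thesis
    by (subst grim_win_iff) (simp add: grim_move_complete_multipartite)
next
  case False
  have "\<not> grim_win (complete_multipartite p {})"
    by (subst grim_win_iff) simp
  with False show ?thesis
    unfolding del_isolated_complete_multipartite if_not_P[OF False] by blast
qed

definition tripartite_vertices :: "nat set \<Rightarrow> nat set \<Rightarrow> nat set \<Rightarrow> (nat \<times> nat) set" where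
  "tripartite_vertices A B C = {0} \<times> A \<union> {1} \<times> B \<union> {2} \<times> C"

definition tripartite :: "nat set \<Rightarrow> nat set \<Rightarrow> nat set \<Rightarrow> (nat \<times> nat) graph" where
  "tripartite A B C = complete_multipartite fst (tripartite_vertices A B C)"

lemma K3_eq_tripartite: "K3 a b c = tripartite {..<a} {..<b} {..<c}"
  unfolding K3_def tripartite_def tripartite_vertices_def complete_multipartite_def Let_def by auto

lemma tripartite_vertices_Diff:
  "tripartite_vertices A B C - {(0, j)} = tripartite_vertices (A - {j}) B C"
  "tripartite_vertices A B C - {(1, j)} = tripartite_vertices A (B - {j}) C"
  "tripartite_vertices A B C - {(2, j)} = tripartite_vertices A B (C - {j})"
  by (auto simp: tripartite_vertices_def)

lemma bex_tripartite_vertices: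
  "(\<exists>v\<in>tripartite_vertices A B C. P v) \<longleftrightarrow> (\<exists>j\<in>A. P (0, j)) \<or> (\<exists>j\<in>B. P (1, j)) \<or> (\<exists>j\<in>C. P (2, j))"
  by (simp only: tripartite_vertices_def bex_Un split_paired_Bex_Sigma bex_simps bex_empty disj_assoc simp_thms)

lemma tripartite_two_parts:
  "(\<exists>x\<in>tripartite_vertices A B C. \<exists>y\<in>tripartite_vertices A B C. fst x \<noteq> fst y) \<longleftrightarrow>
     (A \<noteq> {} \<and> B \<noteq> {}) \<or> (A \<noteq> {} \<and> C \<noteq> {}) \<or> (B \<noteq> {} \<and> C \<noteq> {})"
  by (simp only: bex_tripartite_vertices fst_conv) auto

lemma grim_win_tripartite_rec:
  assumes "finite A" "finite B" "finite C"
  shows "grim_win (del_isolated (tripartite A B C)) \<longleftrightarrow>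
           ((A \<noteq> {} \<and> B \<noteq> {}) \<or> (A \<noteq> {} \<and> C \<noteq> {}) \<or> (B \<noteq> {} \<and> C \<noteq> {})) \<and>
           ((\<exists>j\<in>A. \<not> grim_win (del_isolated (tripartite (A - {j}) B C))) \<or>
            (\<exists>j\<in>B. \<not> grim_win (del_isolated (tripartite A (B - {j}) C))) \<or>
            (\<exists>j\<in>C. \<not> grim_win (del_isolated (tripartite A B (C - {j})))))"
proof -
  have "finite (tripartite_vertices A B C)"
    using assms by (simp add: tripartite_vertices_def)
  then show ?thesis
    unfolding tripartite_def grim_win_complete_multipartite[OF \<open>finite (tripartite_vertices A B C)\<close>]
      tripartite_two_parts
    by (simp only: bex_tripartite_vertices tripartite_vertices_Diff)
qed

text \<open>The outcome of Grim on \<open>K\<^sub>a\<^sub>,\<^sub>b\<^sub>,\<^sub>c\<close> for \<open>a \<le> 1\<close>; for \<open>a = 0\<close> this is the complete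
  bipartite graph \<open>K\<^sub>b\<^sub>,\<^sub>c\<close>.\<close>
definition grim_outcome :: "nat \<Rightarrow> nat \<Rightarrow> nat \<Rightarrow> bool" where
  "grim_outcome a b c =
     (if a = 0 then b \<noteq> 0 \<and> c \<noteq> 0 \<and> (b = 1 \<or> c = 1 \<or> odd (b + c))
      else (b \<noteq> 0 \<or> c \<noteq> 0) \<and>
        (b = 0 \<or> c = 0 \<or>
          (if b = 1 then even c else if c = 1 then even b else b = 2 \<or> c = 2 \<or> even (b + c))))"

lemma grim_outcome_rec:
  assumes "a \<le> 1"
  shows "grim_outcome a b c \<longleftrightarrow>
           ((a > 0 \<and> b > 0) \<or> (a > 0 \<and> c > 0) \<or> (b > 0 \<and> c > 0)) \<and>
           ((a > 0 \<and> \<not> grim_outcome (a - 1) b c) \<or> (b > 0 \<and> \<not> grim_outcome a (b - 1) c) \<or>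
            (c > 0 \<and> \<not> grim_outcome a b (c - 1)))"
proof -
  have "a = 0 \<or> a = 1" using assms by auto
  moreover have "b = 0 \<or> b = 1 \<or> b = 2 \<or> b = 3 \<or> (\<exists>k. b = k + 4)" by presburger
  moreover have "c = 0 \<or> c = 1 \<or> c = 2 \<or> c = 3 \<or> (\<exists>k. c = k + 4)" by presburger
  ultimately show ?thesis
    by (elim disjE exE) (simp_all add: grim_outcome_def)
qed

lemma bex_card_Diff_singleton:
  assumes "finite A"
  shows "(\<exists>j\<in>A. P (card (A - {j}))) \<longleftrightarrow> card A > 0 \<and> P (card A - 1)"
  using assms by (auto simp: card_gt_0_iff)

lemma grim_win_tripartite:
  assumes "finite A" "finite B" "finite C" "card A \<le> 1"
  shows "grim_win (del_isolated (tripartite A B C)) \<longleftrightarrow> grim_outcome (card A) (card B) (card C)"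
  using assms
proof (induction "card A + card B + card C" arbitrary: A B C rule: less_induct)
  case less
  note fin = less.prems(1-3)
  have move_A: "grim_win (del_isolated (tripartite (A - {j}) B C)) \<longleftrightarrow>
      grim_outcome (card (A - {j})) (card B) (card C)" if "j \<in> A" for j
    using less.prems that card_Diff1_less[OF _ that] by (intro less.hyps) auto
  have move_B: "grim_win (del_isolated (tripartite A (B - {j}) C)) \<longleftrightarrow>
      grim_outcome (card A) (card (B - {j})) (card C)" if "j \<in> B" for j
    using less.prems that card_Diff1_less[OF _ that] by (intro less.hyps) auto
  have move_C: "grim_win (del_isolated (tripartite A B (C - {j}))) \<longleftrightarrow>
      grim_outcome (card A) (card B) (card (C - {j}))" if "j \<in> C" for j
    using less.prems that card_Diff1_less[OF _ that] by (intro less.hyps) auto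
  have "grim_win (del_isolated (tripartite A B C)) \<longleftrightarrow>
      ((A \<noteq> {} \<and> B \<noteq> {}) \<or> (A \<noteq> {} \<and> C \<noteq> {}) \<or> (B \<noteq> {} \<and> C \<noteq> {})) \<and>
      ((\<exists>j\<in>A. \<not> grim_outcome (card (A - {j})) (card B) (card C)) \<or>
       (\<exists>j\<in>B. \<not> grim_outcome (card A) (card (B - {j})) (card C)) \<or>
       (\<exists>j\<in>C. \<not> grim_outcome (card A) (card B) (card (C - {j}))))"
    unfolding grim_win_tripartite_rec[OF fin] using move_A move_B move_C by (simp cong: bex_cong)
  also have "\<dots> \<longleftrightarrow> grim_outcome (card A) (card B) (card C)"
    unfolding bex_card_Diff_singleton[OF fin(1), where P = "\<lambda>k. \<not> grim_outcome k (card B) (card C)"]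
      bex_card_Diff_singleton[OF fin(2), where P = "\<lambda>k. \<not> grim_outcome (card A) k (card C)"]
      bex_card_Diff_singleton[OF fin(3), where P = "\<lambda>k. \<not> grim_outcome (card A) (card B) k"]
    using fin by (subst grim_outcome_rec[OF less.prems(4)]) (simp only: card_gt_0_iff simp_thms)
  finally show ?case .
qed

lemma grim_N_K3_one: "grim_N (K3 1 m n) \<longleftrightarrow> grim_outcome 1 m n"
  unfolding grim_N_def K3_eq_tripartite by (subst grim_win_tripartite) auto

theorem lemma3p3:
  fixes m n :: nat
  shows "(m = 1 \<longrightarrow> (grim_N (K3 1 m n) \<longleftrightarrow> even n))
       \<and> (m = 2 \<and> n \<ge> 2 \<longrightarrow> grim_N (K3 1 m n))
       \<and> (m \<ge> 3 \<and> n \<ge> 3 \<longrightarrow> (grim_N (K3 1 m n) \<longleftrightarrow> even (m + n)))"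
  unfolding grim_N_K3_one by (auto simp: grim_outcome_def)

end
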